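(* Let $(A,\mathit{Con},\mid\!\sim)$ be a cumulative nonmonotonic system and $(B,\mathit{Con}^*,\Delta)$ the normal default structure constructed from it as described in the context. Then every $P\in\mathit{Con}$ has a unique extension in $(B,\mathit{Con}^*,\Delta)$, namely $$\delta(P):=\widetilde{P}\cup\{[Q]\mid Q\in\mathit{Con},\ Q\subseteq\widetilde{P},\ \widetilde{Q}=\widetilde{P}\}.$$
   Context: An abstract nonmonotonic system is a triple $(A,\mathit{Con},\mid\!\sim)$ where $\mathit{Con}$ is a collection of finite subsets of $A$ and $\mid\!\sim\ \subseteq\mathit{Con}\times\mathit{Con}$, satisfying: (1) $X\subseteq Y\in\mathit{Con}\Rightarrow X\in\mathit{Con}$; (2) $a\in A\Rightarrow\{a\}\in\mathit{Con}$; (3) $X\mid\!\sim T\Rightarrow X\cup T\in\mathit{Con}$; (4) $Y\subseteq X\Rightarrow X\mid\!\sim Y$; (5) $X\mid\!\sim T$ and $T\cup X\mid\!\sim Y$ imply $X\mid\!\sim Y$; (6) $X\mid\!\sim Y$ and $X\mid\!\sim Z$ imply $X\mid\!\sim Y\cup Z$. It is cumulative if it also satisfies cautious monotony: $X\mid\!\sim\{a\}$ and $X\mid\!\sim\{b\}$ imply $X\cup\{a\}\mid\!\sim\{b\}$. For $X\in\mathit{Con}$, $\widetilde{X}:=\{t\in A\mid X\mid\!\sim\{t\}\}$. Construction: $B:=A\cup\{[X]\mid X\in\mathit{Con}\}$, where $[X]$ are new pairwise distinct tokens. $\Delta:=\{\frac{X:[X]}{[X]}\mid X\in\mathit{Con}\}\cup\{\frac{\{[X]\}:a}{a}\mid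 X\in\mathit{Con},\ a\in\widetilde{X}\setminus X\}$. For finite $W\subseteq B$, $W\in\mathit{Con}^*$ iff (i) $W\cap A\in\mathit{Con}$; (ii) for every pair of tokens $[X],[Y]\in W$, $\widetilde{X}=\widetilde{Y}$; (iii) if $[X]\in W$ then $X\mid\!\sim W\cap A$. An arbitrary subset of $B$ is consistent if all its finite subsets are in $\mathit{Con}^*$. Extensions in $(B,\mathit{Con}^*,\Delta)$: for consistent $x\subseteq B$ and $S\subseteq B$, $\phi(x,S,0)=x$, $\phi(x,S,i+1)=\phi(x,S,i)\cup\{a\mid\frac{X:a}{a}\in\Delta,\ X\subseteq\phi(x,S,i),\ \{a\}\cup S\text{ consistent}\}$, $\Phi(x,S)=\bigcup_i\phi(x,S,i)$; $y$ is an extension of $x$ if $\Phi(x,y)=y$. *)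

theory Defs
  imports Main
begin

text \<open>An abstract nonmonotonic system (A, Con, ent), ent X Y meaning X |~ Y.\<close>

definition nonmono_system :: "'a set \<Rightarrow> 'a set set \<Rightarrow> ('a set \<Rightarrow> 'a set \<Rightarrow> bool) \<Rightarrow> bool" where
  "nonmono_system A Con ent \<longleftrightarrow>
     (\<forall>X\<in>Con. finite X \<and> X \<subseteq> A) \<and>
     (\<forall>X Y. ent X Y \<longrightarrow> X \<in> Con \<and> Y \<in> Con) \<and>
     (\<forall>X Y. X \<subseteq> Y \<and> Y \<in> Con \<longrightarrow> X \<in> Con) \<and>
     (\<forall>a\<in>A. {a} \<in> Con) \<and>
     (\<forall>X T. ent X T \<longrightarrow> X \<union> T \<in> Con) \<and>
     (\<forall>X Y. X \<in> Con \<and> Y \<subseteq> X \<longrightarrow> ent X Y) \<and>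
     (\<forall>X T Y. ent X T \<and> ent (T \<union> X) Y \<longrightarrow> ent X Y) \<and>
     (\<forall>X Y Z. ent X Y \<and> ent X Z \<longrightarrow> ent X (Y \<union> Z))"

definition cumulative :: "'a set \<Rightarrow> 'a set set \<Rightarrow> ('a set \<Rightarrow> 'a set \<Rightarrow> bool) \<Rightarrow> bool" where
  "cumulative A Con ent \<longleftrightarrow> nonmono_system A Con ent \<and>
     (\<forall>X a b. ent X {a} \<and> ent X {b} \<longrightarrow> ent (X \<union> {a}) {b})"

definition tilde :: "'a set \<Rightarrow> ('a set \<Rightarrow> 'a set \<Rightarrow> bool) \<Rightarrow> 'a set \<Rightarrow> 'a set" where
  "tilde A ent X = {t \<in> A. ent X {t}}"

text \<open>Elements of B: old atoms and new tokens [X].\<close>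
datatype 'a tok = Atom 'a | Brk "'a set"

definition Bset :: "'a set \<Rightarrow> 'a set set \<Rightarrow> 'a tok set" where
  "Bset A Con = Atom ` A \<union> Brk ` Con"

definition atoms :: "'a tok set \<Rightarrow> 'a set" where
  "atoms W = {a. Atom a \<in> W}"

text \<open>Normal defaults X:c/c are represented by pairs (X, c).\<close>
definition Delta :: "'a set \<Rightarrow> 'a set set \<Rightarrow> ('a set \<Rightarrow> 'a set \<Rightarrow> bool) \<Rightarrow> ('a tok set \<times> 'a tok) set" where
  "Delta A Con ent =
     {(Atom ` X, Brk X) | X. X \<in> Con} \<union>
     {({Brk X}, Atom a) | X a. X \<in> Con \<and> a \<in> tilde A ent X - X}"

definition ConStar :: "'a set \<Rightarrow> 'a set set \<Rightarrow> ('a set \<Rightarrow> 'a set \<Rightarrow> bool) \<Rightarrow> 'a tok set \<Rightarrow> bool" where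
  "ConStar A Con ent W \<longleftrightarrow> finite W \<and> W \<subseteq> Bset A Con \<and>
     atoms W \<in> Con \<and>
     (\<forall>X Y. Brk X \<in> W \<and> Brk Y \<in> W \<longrightarrow> tilde A ent X = tilde A ent Y) \<and>
     (\<forall>X. Brk X \<in> W \<longrightarrow> ent X (atoms W))"

definition consistent :: "'a set \<Rightarrow> 'a set set \<Rightarrow> ('a set \<Rightarrow> 'a set \<Rightarrow> bool) \<Rightarrow> 'a tok set \<Rightarrow> bool" where
  "consistent A Con ent x \<longleftrightarrow> (\<forall>W. finite W \<and> W \<subseteq> x \<longrightarrow> ConStar A Con ent W)"

fun phi :: "'a set \<Rightarrow> 'a set set \<Rightarrow> ('a set \<Rightarrow> 'a set \<Rightarrow> bool) \<Rightarrow> 'a tok set \<Rightarrow> 'a tok set \<Rightarrow> nat \<Rightarrow> 'a tok set" where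
  "phi A Con ent x S 0 = x"
| "phi A Con ent x S (Suc i) = phi A Con ent x S i \<union>
     {c. \<exists>X. (X, c) \<in> Delta A Con ent \<and> X \<subseteq> phi A Con ent x S i \<and>
            consistent A Con ent (insert c S)}"

definition Phi :: "'a set \<Rightarrow> 'a set set \<Rightarrow> ('a set \<Rightarrow> 'a set \<Rightarrow> bool) \<Rightarrow> 'a tok set \<Rightarrow> 'a tok set \<Rightarrow> 'a tok set" where
  "Phi A Con ent x S = (\<Union>i. phi A Con ent x S i)"

definition is_extension :: "'a set \<Rightarrow> 'a set set \<Rightarrow> ('a set \<Rightarrow> 'a set \<Rightarrow> bool) \<Rightarrow> 'a tok set \<Rightarrow> 'a tok set \<Rightarrow> bool" where
  "is_extension A Con ent x y \<longleftrightarrow> consistent A Con ent x \<and> Phi A Con ent x y = y"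

definition delta :: "'a set \<Rightarrow> 'a set set \<Rightarrow> ('a set \<Rightarrow> 'a set \<Rightarrow> bool) \<Rightarrow> 'a set \<Rightarrow> 'a tok set" where
  "delta A Con ent P = Atom ` tilde A ent P \<union>
     {Brk Q | Q. Q \<in> Con \<and> Q \<subseteq> tilde A ent P \<and> tilde A ent Q = tilde A ent P}"

end

theory Submission
  imports Defs
begin

text \<open>
  In a cumulative system, adding finitely many consequences of X to X does not change the
  consequence set tilde X; so two finite sets that entail each other have the same consequences.
  The defaults of the construction can therefore only ever add a token [Q] with
  tilde Q = tilde P (the consistency of [Q] together with P forces Q to entail P), and then
  only atoms of tilde P; hence every extension of P lies inside delta P.  Conversely delta P is
  consistent, and from any subset of it the defaults fire in three rounds
  ([P], then tilde P, then every [Q]) to produce all of delta P.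
\<close>

locale nonmonotonic_system =
  fixes A :: "'a set" and Con :: "'a set set" and ent :: "'a set \<Rightarrow> 'a set \<Rightarrow> bool"
  assumes system: "nonmono_system A Con ent"
begin

lemma Con_finite: "X \<in> Con \<Longrightarrow> finite X"
  using system unfolding nonmono_system_def by metis

lemma Con_subset: "X \<in> Con \<Longrightarrow> X \<subseteq> A"
  using system unfolding nonmono_system_def by metis

lemma ent_Con: "ent X Y \<Longrightarrow> X \<in> Con \<and> Y \<in> Con"
  using system unfolding nonmono_system_def by metis

lemma ent_Un_Con: "ent X T \<Longrightarrow> X \<union> T \<in> Con"
  using system unfolding nonmono_system_def by metis

lemma ent_subset: "X \<in> Con \<Longrightarrow> Y \<subseteq> X \<Longrightarrow> ent X Y"
  using system unfolding nonmono_system_def by metis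

lemma ent_cut: "ent X T \<Longrightarrow> ent (T \<union> X) Y \<Longrightarrow> ent X Y"
  using system unfolding nonmono_system_def by metis

lemma ent_Un: "ent X Y \<Longrightarrow> ent X Z \<Longrightarrow> ent X (Y \<union> Z)"
  using system unfolding nonmono_system_def by metis

lemma Con_subset_tilde: "X \<in> Con \<Longrightarrow> X \<subseteq> tilde A ent X"
  unfolding tilde_def using Con_subset ent_subset by blast

lemma ent_imp_subset_tilde:
  assumes "ent X T"
  shows "T \<subseteq> tilde A ent X"
proof
  fix t assume "t \<in> T"
  have "ent (T \<union> X) {t}"
    using ent_subset[OF ent_Un_Con[OF assms]] \<open>t \<in> T\<close> by (simp add: Un_commute)
  then have "ent X {t}" using ent_cut[OF assms] by blast
  moreover have "t \<in> A" using Con_subset ent_Con[OF assms] \<open>t \<in> T\<close> by blast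
  ultimately show "t \<in> tilde A ent X" by (simp add: tilde_def)
qed

lemma ent_if_subset_tilde:
  assumes "X \<in> Con" "finite T" "T \<subseteq> tilde A ent X"
  shows "ent X T"
  using assms(2,3)
proof (induction T rule: finite_induct)
  case empty
  then show ?case using ent_subset[OF assms(1)] by simp
next
  case (insert a T)
  then have "ent X {a}" by (simp add: tilde_def)
  with insert show ?case using ent_Un[of X "{a}" T] by simp
qed

end

locale cumulative_system = nonmonotonic_system +
  assumes cautious_monotony: "ent X {a} \<Longrightarrow> ent X {b} \<Longrightarrow> ent (X \<union> {a}) {b}"
begin

lemma cautious_monotony_finite:
  assumes "X \<in> Con" "finite T" "T \<subseteq> tilde A ent X" "t \<in> tilde A ent X"
  shows "ent (X \<union> T) {t}"
  using assms(2-4)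
proof (induction T arbitrary: t rule: finite_induct)
  case empty
  then show ?case by (simp add: tilde_def)
next
  case (insert a T)
  then have "ent (X \<union> T) {a}" "ent (X \<union> T) {t}" by auto
  from cautious_monotony[OF this] show ?case by (simp add: Un_assoc)
qed

lemma tilde_Un_eq:
  assumes "X \<in> Con" "finite T" "T \<subseteq> tilde A ent X"
  shows "tilde A ent (X \<union> T) = tilde A ent X"
proof
  show "tilde A ent (X \<union> T) \<subseteq> tilde A ent X"
    using ent_cut[OF ent_if_subset_tilde[OF assms]] by (auto simp: tilde_def Un_commute)
  show "tilde A ent X \<subseteq> tilde A ent (X \<union> T)"
    using cautious_monotony_finite[OF assms] by (auto simp: tilde_def)
qed

lemma tilde_eq_if_subset_tilde:
  assumes "X \<in> Con" "Y \<in> Con" "X \<subseteq> tilde A ent Y" "Y \<subseteq> tilde A ent X"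
  shows "tilde A ent X = tilde A ent Y"
  using tilde_Un_eq[OF assms(1) Con_finite[OF assms(2)] assms(4)]
    tilde_Un_eq[OF assms(2) Con_finite[OF assms(1)] assms(3)]
  by (simp add: Un_commute)

end

lemma Atom_in_delta_iff [simp]: "Atom a \<in> delta A Con ent P \<longleftrightarrow> a \<in> tilde A ent P"
  by (auto simp: delta_def)

lemma Brk_in_delta_iff [simp]:
  "Brk Q \<in> delta A Con ent P \<longleftrightarrow> Q \<in> Con \<and> Q \<subseteq> tilde A ent P \<and> tilde A ent Q = tilde A ent P"
  by (auto simp: delta_def)

lemma finite_atoms: "finite W \<Longrightarrow> finite (atoms W)"
  unfolding atoms_def by (simp add: finite_vimageI[of W Atom, unfolded vimage_def] inj_def)

lemma consistent_subset: "consistent A Con ent x \<Longrightarrow> y \<subseteq> x \<Longrightarrow> consistent A Con ent y"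
  unfolding consistent_def by blast

lemma consistent_Brk_ent:
  assumes "consistent A Con ent S" "Brk Y \<in> S" "Atom ` P \<subseteq> S" "finite P"
  shows "ent Y P"
proof -
  have "finite (insert (Brk Y) (Atom ` P))" "insert (Brk Y) (Atom ` P) \<subseteq> S"
    using assms(2-4) by auto
  then have "ConStar A Con ent (insert (Brk Y) (Atom ` P))"
    using assms(1) unfolding consistent_def by blast
  then have "ent Y (atoms (insert (Brk Y) (Atom ` P)))"
    unfolding ConStar_def by blast
  moreover have "atoms (insert (Brk Y) (Atom ` P)) = P"
    by (auto simp: atoms_def)
  ultimately show ?thesis by simp
qed

lemma phi_subset_Phi: "phi A Con ent x S i \<subseteq> Phi A Con ent x S"
  unfolding Phi_def by blast

lemma subset_Phi: "x \<subseteq> Phi A Con ent x S"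
  using phi_subset_Phi[of A Con ent x S 0] by simp

lemma phi_mono: "i \<le> j \<Longrightarrow> phi A Con ent x S i \<subseteq> phi A Con ent x S j"
  by (rule lift_Suc_mono_le[where f = "phi A Con ent x S"]) auto

lemma phi_SucI:
  "(X, c) \<in> Delta A Con ent \<Longrightarrow> X \<subseteq> phi A Con ent x S i \<Longrightarrow> consistent A Con ent (insert c S)
    \<Longrightarrow> c \<in> phi A Con ent x S (Suc i)"
  unfolding phi.simps(2) by blast

lemma Phi_subsetI:
  assumes "x \<subseteq> D"
    and "\<And>X c. (X, c) \<in> Delta A Con ent \<Longrightarrow> X \<subseteq> D \<Longrightarrow> consistent A Con ent (insert c S) \<Longrightarrow> c \<in> D"
  shows "Phi A Con ent x S \<subseteq> D"
proof -
  have "phi A Con ent x S i \<subseteq> D" for i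
  proof (induction i)
    case 0
    show ?case using assms(1) by simp
  next
    case (Suc i)
    then show ?case unfolding phi.simps(2) using assms(2) by blast
  qed
  then show ?thesis unfolding Phi_def by blast
qed

context nonmonotonic_system
begin

lemma Atom_subset_delta: "P \<in> Con \<Longrightarrow> Atom ` P \<subseteq> delta A Con ent P"
  using Con_subset_tilde[of P] by auto

lemma consistent_delta:
  assumes "P \<in> Con"
  shows "consistent A Con ent (delta A Con ent P)"
  unfolding consistent_def
proof (intro allI impI)
  fix W assume W: "finite W \<and> W \<subseteq> delta A Con ent P"
  then have atoms_W: "atoms W \<subseteq> tilde A ent P"
    by (auto simp: atoms_def)
  have ent_atoms: "ent X (atoms W)" if "X \<in> Con" "tilde A ent X = tilde A ent P" for X
    using ent_if_subset_tilde[OF that(1) finite_atoms] W atoms_W that(2) by simp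
  have "W \<subseteq> Bset A Con"
    using W by (auto simp: delta_def Bset_def tilde_def)
  moreover have "atoms W \<in> Con"
    using ent_Con[OF ent_atoms[OF assms refl]] by blast
  moreover have "\<forall>X Y. Brk X \<in> W \<and> Brk Y \<in> W \<longrightarrow> tilde A ent X = tilde A ent Y"
    using W Brk_in_delta_iff by (metis subsetD)
  moreover have "\<forall>X. Brk X \<in> W \<longrightarrow> ent X (atoms W)"
    using W ent_atoms by auto
  ultimately show "ConStar A Con ent W"
    unfolding ConStar_def using W by (intro conjI) blast+
qed

lemma delta_subset_Phi:
  assumes "P \<in> Con" "S \<subseteq> delta A Con ent P"
  shows "delta A Con ent P \<subseteq> Phi A Con ent (Atom ` P) S"
proof -
  let ?phi = "phi A Con ent (Atom ` P) S"
  have fires: "c \<in> ?phi (Suc i)"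
    if "(X, c) \<in> Delta A Con ent" "X \<subseteq> ?phi i" "c \<in> delta A Con ent P" for X c i
  proof (rule phi_SucI[OF that(1,2)])
    show "consistent A Con ent (insert c S)"
      using consistent_subset[OF consistent_delta[OF assms(1)]] assms(2) that(3) by blast
  qed
  have "P \<subseteq> tilde A ent P" using Con_subset_tilde[OF assms(1)] .
  then have Brk_P: "Brk P \<in> ?phi 1"
    using fires[of "Atom ` P" "Brk P" 0] assms(1) by (simp add: Delta_def)
  have atoms: "Atom ` tilde A ent P \<subseteq> ?phi 2"
  proof
    fix c assume "c \<in> Atom ` tilde A ent P"
    then obtain a where a: "c = Atom a" "a \<in> tilde A ent P" by blast
    show "c \<in> ?phi 2"
    proof (cases "a \<in> P")
      case True
      then show ?thesis using a phi_mono[of 0 2 A Con ent "Atom ` P" S] by auto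
    next
      case False
      then have "({Brk P}, Atom a) \<in> Delta A Con ent"
        using assms(1) a(2) by (auto simp: Delta_def)
      then show ?thesis using fires[of _ _ 1] Brk_P a by (simp add: numeral_2_eq_2)
    qed
  qed
  have "delta A Con ent P \<subseteq> ?phi 3"
  proof
    fix c assume c: "c \<in> delta A Con ent P"
    show "c \<in> ?phi 3"
    proof (cases c)
      case (Atom a)
      then show ?thesis using c atoms phi_mono[of 2 3 A Con ent "Atom ` P" S] by auto
    next
      case (Brk Q)
      then have "(Atom ` Q, c) \<in> Delta A Con ent" "Atom ` Q \<subseteq> ?phi 2"
        using c atoms by (auto simp: Delta_def)
      then show ?thesis using fires[of _ _ 2] c by (simp add: numeral_3_eq_3)
    qed
  qed
  then show ?thesis using phi_subset_Phi by blast
qed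

end

context cumulative_system
begin

lemma Phi_subset_delta:
  assumes "P \<in> Con" "Atom ` P \<subseteq> S"
  shows "Phi A Con ent (Atom ` P) S \<subseteq> delta A Con ent P"
proof (rule Phi_subsetI)
  show "Atom ` P \<subseteq> delta A Con ent P" using Atom_subset_delta[OF assms(1)] .
  fix X c
  assume fires: "(X, c) \<in> Delta A Con ent" "X \<subseteq> delta A Con ent P"
    and consistent: "consistent A Con ent (insert c S)"
  from fires(1) consider (Brk) Y where "X = Atom ` Y" "c = Brk Y" "Y \<in> Con"
    | (Atom) Y a where "X = {Brk Y}" "c = Atom a" "a \<in> tilde A ent Y"
    unfolding Delta_def by blast
  then show "c \<in> delta A Con ent P"
  proof cases
    case Brk
    have "Y \<subseteq> tilde A ent P" using fires(2) Brk(1) by auto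
    moreover have "ent Y P"
      using consistent_Brk_ent[OF consistent _ _ Con_finite[OF assms(1)]] Brk(2) assms(2) by blast
    then have "P \<subseteq> tilde A ent Y" by (rule ent_imp_subset_tilde)
    ultimately show ?thesis
      using tilde_eq_if_subset_tilde[OF Brk(3) assms(1)] Brk(2,3) by simp
  next
    case Atom
    then show ?thesis using fires(2) by simp
  qed
qed

lemma is_extension_iff_eq_delta:
  assumes "P \<in> Con"
  shows "is_extension A Con ent (Atom ` P) y \<longleftrightarrow> y = delta A Con ent P"
proof
  assume "is_extension A Con ent (Atom ` P) y"
  then have fixpoint: "Phi A Con ent (Atom ` P) y = y" by (simp add: is_extension_def)
  then have "Atom ` P \<subseteq> y" using subset_Phi by metis
  then have "y \<subseteq> delta A Con ent P" using Phi_subset_delta[OF assms] by (metis fixpoint)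
  moreover from this have "delta A Con ent P \<subseteq> y" using delta_subset_Phi[OF assms] by (metis fixpoint)
  ultimately show "y = delta A Con ent P" by (rule subset_antisym)
next
  assume y: "y = delta A Con ent P"
  have "consistent A Con ent (Atom ` P)"
    using consistent_subset[OF consistent_delta] Atom_subset_delta assms by blast
  moreover have "Phi A Con ent (Atom ` P) y = y"
    using Phi_subset_delta[OF assms] delta_subset_Phi[OF assms] Atom_subset_delta[OF assms] y by blast
  ultimately show "is_extension A Con ent (Atom ` P) y" by (simp add: is_extension_def)
qed

end

theorem lemma6:
  fixes A :: "'a set" and Con :: "'a set set" and ent :: "'a set \<Rightarrow> 'a set \<Rightarrow> bool"
  assumes "cumulative A Con ent"
    and "P \<in> Con"
  shows "\<forall>y. is_extension A Con ent (Atom ` P) y \<longleftrightarrow> y = delta A Con ent P"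
proof -
  have "cumulative_system A Con ent"
    using assms(1) unfolding cumulative_def
    by unfold_locales blast+
  then show ?thesis using cumulative_system.is_extension_iff_eq_delta assms(2) by blast
qed

end
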